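(* For every integer $n\geq 2$, $$\sum_{k=1}^{n-1}\frac{B_{2k}B_{2n-2k}}{(2k)(2n-2k)}=\sum_{k=1}^{n-1}\frac{B_{2k}B_{2n-2k}}{(2k)(2n-2k)}\binom{2n}{2k}+\frac{B_{2n}}{n}H_{2n}.$$
   Context: $B_n$ denotes the Bernoulli numbers, defined by $\frac{x}{e^x-1}=\sum_{n\ge 0}B_n\frac{x^n}{n!}$ (so $B_0=1$, $B_2=1/6$, $B_4=-1/30,\dots$). $H_i=\sum_{j=1}^i \frac1j$ is the $i$-th harmonic number. *)

theory Defs
  imports "HOL-Analysis.Analysis" "HOL-Computational_Algebra.Formal_Power_Series"
begin

definition bernoulli_fps :: "real fps" where
  "bernoulli_fps = fps_X / (fps_exp 1 - 1)"

definition bernoulli :: "nat \<Rightarrow> real" where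
  "bernoulli n = fact n * fps_nth bernoulli_fps n"

end

theory Submission
  imports Defs
begin

(*
  With beta_k = B_k/k! we have B(t) = t/(e^t - 1) = sum_k beta_k t^k.  For x + y = 1 put
  p = e^(xt) and q = e^(yt), so that pq = e^t; the partial-fraction identity
  1/((p-1)(q-1)) = (1 + 1/(p-1) + 1/(q-1))/(pq-1) becomes
    B(xt) B(yt) = y B(xt) B(t) + x B(t) B(yt) + xy t B(t).
  Comparing coefficients of t^n and dividing by xy yields a polynomial identity on (0,1).
  Integrating it over (0,1), with the Beta integrals of x^a (1-x)^b and
  (1 - x^(n+1) - y^(n+1))/(xy) = sum_{k<n} (x^k + y^k) accounting for the harmonic number,
  gives Miki's identity for every n >= 2 with an extra term B_(n-1).  For even n this term and
  all odd-index terms vanish, since B(-t) = B(t) + t.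
*)

lemma sum_atLeastAtMost_split_ends:
  fixes n :: nat
  assumes "1 \<le> n"
  shows "(\<Sum>i=0..n. f i) = f 0 + (\<Sum>i=1..n-1. f i) + f n"
proof -
  have "{0..n} = insert 0 (insert n {1..n-1})"
    using assms by auto
  then show ?thesis
    using assms by (simp add: add_ac)
qed

lemma sum_odd_vanishing_eq_sum_even:
  fixes h :: "nat \<Rightarrow> 'a::comm_monoid_add"
  assumes "\<And>i. i \<in> {1..2*n-1} \<Longrightarrow> odd i \<Longrightarrow> h i = 0"
  shows "(\<Sum>i=1..2*n-1. h i) = (\<Sum>k=1..n-1. h (2*k))"
proof -
  have "(\<Sum>k=1..n-1. h (2*k)) = sum h ((\<lambda>k. 2 * k) ` {1..n-1})"
    by (subst sum.reindex) (auto simp: inj_on_def)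
  also have "\<dots> = (\<Sum>i=1..2*n-1. h i)"
  proof (rule sum.mono_neutral_left)
    show "\<forall>i\<in>{1..2*n-1} - (\<lambda>k. 2 * k) ` {1..n-1}. h i = 0"
      using assms by (fastforce elim!: evenE)
  qed auto
  finally show ?thesis
    by simp
qed

lemma quotient_product_decomposition:
  fixes a b c p q t x y :: "'a::idom"
  assumes "a * (p - 1) = x * t" "b * (q - 1) = y * t" "c * (p * q - 1) = t"
    and "p \<noteq> 1" "q \<noteq> 1" "p * q \<noteq> 1"
  shows "a * b = y * a * c + x * c * b + x * y * t * c"
proof -
  have "a * b * ((p - 1) * (q - 1) * (p * q - 1))
      = (y * a * c + x * c * b + x * y * t * c) * ((p - 1) * (q - 1) * (p * q - 1))"
    using assms(1-3) by algebra
  with assms(4-6) show ?thesis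
    by simp
qed

lemma mult_sum_interior_powers:
  fixes x y :: "'a::comm_ring_1"
  shows "x * y * (\<Sum>i=1..n-1. b i * (x ^ (i - 1) * y ^ (n - i - 1)))
           = (\<Sum>i=1..n-1. b i * x ^ i * y ^ (n - i))"
    and "x * y * (\<Sum>i=1..n-1. b i * (x ^ (i - 1) + y ^ (n - i - 1)))
           = (\<Sum>i=1..n-1. b i * (y * x ^ i + x * y ^ (n - i)))"
proof -
  have power_split: "x ^ i = x * x ^ (i - 1)" "y ^ (n - i) = y * y ^ (n - i - 1)"
    if "i \<in> {1..n-1}" for i
    using that by (auto simp flip: power_Suc simp: Suc_diff_Suc)
  show "x * y * (\<Sum>i=1..n-1. b i * (x ^ (i - 1) * y ^ (n - i - 1)))
      = (\<Sum>i=1..n-1. b i * x ^ i * y ^ (n - i))"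
    unfolding sum_distrib_left by (intro sum.cong refl) (simp add: power_split mult_ac)
  show "x * y * (\<Sum>i=1..n-1. b i * (x ^ (i - 1) + y ^ (n - i - 1)))
      = (\<Sum>i=1..n-1. b i * (y * x ^ i + x * y ^ (n - i)))"
    unfolding sum_distrib_left by (intro sum.cong refl) (simp add: power_split algebra_simps)
qed

lemma one_minus_power_Suc_sum:
  fixes x y :: "'a::comm_ring_1"
  assumes "x + y = 1"
  shows "1 - x ^ Suc n - y ^ Suc n = x * y * (\<Sum>k<n. x ^ k + y ^ k)"
proof (induction n)
  case 0
  show ?case
    using assms by (simp add: algebra_simps)
next
  case (Suc n)
  have "1 - x ^ Suc (Suc n) - y ^ Suc (Suc n)
      = (1 - x ^ Suc n - y ^ Suc n) + x ^ Suc n * (1 - x) + y ^ Suc n * (1 - y)"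
    by (simp add: algebra_simps)
  also have "\<dots> = x * y * (\<Sum>k<n. x ^ k + y ^ k) + x * y * (x ^ n + y ^ n)"
  proof -
    have "1 - x = y" "1 - y = x"
      using assms by (simp_all add: algebra_simps)
    then show ?thesis
      unfolding Suc.IH by (simp only:) (simp add: algebra_simps)
  qed
  also have "\<dots> = x * y * (\<Sum>k<Suc n. x ^ k + y ^ k)"
    by (simp add: algebra_simps)
  finally show ?case .
qed

(* N is kept separate from a + b + 1 so that these rules apply by intro to any syntactic
   form of the value. *)
lemma has_integral_beta_nat:
  assumes "a + b + 1 = N"
  shows "((\<lambda>t::real. t ^ a * (1 - t) ^ b) has_integral fact a * fact b / fact N) {0<..<1}"
proof -
  have "((\<lambda>t. t powr (real (Suc a) - 1) * (1 - t) powr (real (Suc b) - 1))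
          has_integral Beta (Suc a) (Suc b)) {0<..<1}"
    using has_integral_Beta_real[of "Suc a" "Suc b"] by (simp add: has_integral_Icc_iff_Ioo)
  moreover have "Beta (Suc a) (Suc b) = fact a * fact b / fact N"
  proof -
    have "real (Suc a) + real (Suc b) = real (Suc N)"
      using assms by simp
    then show ?thesis
      unfolding Beta_def by (simp only: Gamma_fact[of _, folded of_nat_Suc])
  qed
  moreover have "t powr (real (Suc a) - 1) * (1 - t) powr (real (Suc b) - 1) = t ^ a * (1 - t) ^ b"
    if "t \<in> {0<..<1}" for t :: real
    using that by (simp add: powr_realpow)
  ultimately show ?thesis
    using has_integral_cong by (metis (no_types, lifting))
qed

lemma has_integral_power_unit_interval:
  assumes "Suc a = N"
  shows "((\<lambda>t::real. t ^ a) has_integral 1 / real N) {0<..<1}"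
proof -
  have "fact a * fact 0 / fact N = 1 / (real N :: real)"
    unfolding assms[symmetric] fact_Suc by simp
  then show ?thesis
    using has_integral_beta_nat[of a 0 N] assms by simp
qed

lemma has_integral_power_one_minus_unit_interval:
  assumes "Suc b = N"
  shows "((\<lambda>t::real. (1 - t) ^ b) has_integral 1 / real N) {0<..<1}"
proof -
  have "fact 0 * fact b / fact N = 1 / (real N :: real)"
    unfolding assms[symmetric] fact_Suc by simp
  then show ?thesis
    using has_integral_beta_nat[of 0 b N] assms by simp
qed

lemma has_integral_const_unit_interval: "((\<lambda>t::real. c) has_integral (c::real)) {0<..<1}"
  using has_integral_const_real[where c = c and a = 0 and b = 1]
  by (simp add: has_integral_Icc_iff_Ioo)

lemma fps_exp_minus_one_nonzero:
  fixes x :: "'a::field_char_0"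
  assumes "x \<noteq> 0"
  shows "fps_exp x - 1 \<noteq> 0"
proof
  assume "fps_exp x - 1 = 0"
  then have "fps_nth (fps_exp x - 1) 1 = 0" by simp
  with assms show False by simp
qed

lemma bernoulli_fps_times_exp_minus_one: "bernoulli_fps * (fps_exp 1 - 1) = fps_X"
proof -
  have "subdegree (fps_exp (1::real) - 1) \<le> 1"
    by (rule subdegree_leI) simp
  then show ?thesis
    unfolding bernoulli_fps_def by (intro fps_times_divide_eq fps_exp_minus_one_nonzero) auto
qed

lemma bernoulli_fps_nth: "fps_nth bernoulli_fps n = bernoulli n / fact n"
  by (simp add: bernoulli_def)

lemma bernoulli_0: "bernoulli 0 = 1"
proof -
  have "fps_nth (bernoulli_fps * (fps_exp 1 - 1)) 1 = fps_nth fps_X 1"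
    by (simp only: bernoulli_fps_times_exp_minus_one)
  then show ?thesis by (simp add: fps_mult_nth bernoulli_def)
qed

lemma bernoulli_fps_compose_linear_times_exp:
  "(bernoulli_fps oo (fps_const x * fps_X)) * (fps_exp x - 1) = fps_const x * fps_X"
proof -
  have "(bernoulli_fps * (fps_exp 1 - 1)) oo (fps_const x * fps_X) = fps_X oo (fps_const x * fps_X)"
    by (simp only: bernoulli_fps_times_exp_minus_one)
  moreover have "fps_X oo (fps_const x * fps_X) = fps_const x * fps_X"
    by (rule fps_ext) simp
  ultimately show ?thesis
    by (simp add: fps_compose_mult_distrib fps_compose_sub_distrib)
qed

lemma bernoulli_fps_compose_neg_X: "bernoulli_fps oo (fps_const (-1) * fps_X) = bernoulli_fps + fps_X"
proof -
  let ?E = "fps_exp (1::real)" and ?E' = "fps_exp (-1::real)"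
  have inverse: "?E' * ?E = 1"
    using fps_exp_add_mult[of "-1::real" 1] by simp
  have "(bernoulli_fps + fps_X) * (?E' - 1) = - ?E' * (bernoulli_fps * (?E - 1) + fps_X * (?E - 1))"
    using inverse by (simp add: algebra_simps)
  also have "\<dots> = - fps_X * (?E' * ?E)"
    unfolding bernoulli_fps_times_exp_minus_one by (simp add: algebra_simps)
  also have "\<dots> = (bernoulli_fps oo (fps_const (-1) * fps_X)) * (?E' - 1)"
    using bernoulli_fps_compose_linear_times_exp[of "-1"] inverse by simp
  finally show ?thesis
    using fps_exp_minus_one_nonzero[of "-1::real"] by simp
qed

lemma bernoulli_odd_eq_0:
  assumes "odd k" "k \<noteq> 1"
  shows "bernoulli k = 0"
proof -
  have "fps_nth (bernoulli_fps oo (fps_const (-1) * fps_X)) k = fps_nth (bernoulli_fps + fps_X) k"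
    by (simp only: bernoulli_fps_compose_neg_X)
  then have "fps_nth bernoulli_fps k = 0"
    using assms by simp
  then show ?thesis
    by (simp add: bernoulli_def)
qed

lemma bernoulli_fps_compose_linear_product:
  fixes x y :: real
  assumes "x \<noteq> 0" "y \<noteq> 0" "x + y = 1"
  defines "B z \<equiv> bernoulli_fps oo (fps_const z * fps_X)"
  shows "B x * B y = fps_const y * B x * bernoulli_fps + fps_const x * bernoulli_fps * B y
           + fps_const x * fps_const y * fps_X * bernoulli_fps"
proof (rule quotient_product_decomposition)
  show "B x * (fps_exp x - 1) = fps_const x * fps_X" "B y * (fps_exp y - 1) = fps_const y * fps_X"
    unfolding B_def by (fact bernoulli_fps_compose_linear_times_exp)+
  have "fps_exp x * fps_exp y = fps_exp (1::real)"
    using assms(3) by (simp flip: fps_exp_add_mult)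
  then show "bernoulli_fps * (fps_exp x * fps_exp y - 1) = fps_X"
    "fps_exp x * fps_exp y \<noteq> 1"
    using bernoulli_fps_times_exp_minus_one fps_exp_minus_one_nonzero[of "1::real"] by simp_all
qed (use assms(1,2) fps_exp_minus_one_nonzero in auto)

lemma bernoulli_convolution_identity:
  fixes x y :: real
  assumes "x \<noteq> 0" "y \<noteq> 0" "x + y = 1" "n \<ge> 1"
  shows "(\<Sum>i=0..n. fps_nth bernoulli_fps i * fps_nth bernoulli_fps (n - i) * x ^ i * y ^ (n - i))
       = (\<Sum>i=0..n. fps_nth bernoulli_fps i * fps_nth bernoulli_fps (n - i) * (y * x ^ i + x * y ^ (n - i)))
         + x * y * fps_nth bernoulli_fps (n - 1)"
proof -
  define B where "B z = bernoulli_fps oo (fps_const z * fps_X)" for z :: real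
  have product: "B x * B y = fps_const y * (B x * bernoulli_fps) + fps_const x * (bernoulli_fps * B y)
           + fps_const x * fps_const y * (fps_X * bernoulli_fps)"
    using bernoulli_fps_compose_linear_product[OF assms(1-3)] unfolding B_def by (simp add: mult.assoc)
  have "(\<Sum>i=0..n. fps_nth bernoulli_fps i * fps_nth bernoulli_fps (n - i) * x ^ i * y ^ (n - i))
      = fps_nth (B x * B y) n"
    unfolding B_def fps_mult_nth fps_nth_compose_linear by (simp add: mult_ac)
  also have "\<dots> = fps_nth (fps_const y * (B x * bernoulli_fps)) n
      + fps_nth (fps_const x * (bernoulli_fps * B y)) n
      + fps_nth (fps_const x * fps_const y * (fps_X * bernoulli_fps)) n"
    unfolding product fps_add_nth ..
  also have "fps_nth (fps_const y * (B x * bernoulli_fps)) n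
      = (\<Sum>i=0..n. fps_nth bernoulli_fps i * fps_nth bernoulli_fps (n - i) * (y * x ^ i))"
    unfolding fps_mult_left_const_nth unfolding B_def fps_mult_nth fps_nth_compose_linear
    by (simp add: sum_distrib_left mult_ac)
  also have "fps_nth (fps_const x * (bernoulli_fps * B y)) n
      = (\<Sum>i=0..n. fps_nth bernoulli_fps i * fps_nth bernoulli_fps (n - i) * (x * y ^ (n - i)))"
    unfolding fps_mult_left_const_nth unfolding B_def fps_mult_nth fps_nth_compose_linear
    by (simp add: sum_distrib_left mult_ac)
  also have "fps_nth (fps_const x * fps_const y * (fps_X * bernoulli_fps)) n
      = x * y * fps_nth bernoulli_fps (n - 1)"
    using assms(4) by simp
  finally show ?thesis
    by (simp add: distrib_left sum.distrib)
qed

lemma bernoulli_convolution_divided: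
  fixes x y :: real
  assumes "x \<noteq> 0" "y \<noteq> 0" "x + y = 1" "n \<ge> 2"
  shows "(\<Sum>i=1..n-1. fps_nth bernoulli_fps i * fps_nth bernoulli_fps (n - i) * (x ^ (i - 1) * y ^ (n - i - 1)))
       = (\<Sum>i=1..n-1. fps_nth bernoulli_fps i * fps_nth bernoulli_fps (n - i) * (x ^ (i - 1) + y ^ (n - i - 1)))
         + fps_nth bernoulli_fps (n - 1) + fps_nth bernoulli_fps n * (\<Sum>k<n. x ^ k + y ^ k)"
proof -
  define b where "b i = fps_nth bernoulli_fps i * fps_nth bernoulli_fps (n - i)" for i
  have ends: "b 0 = fps_nth bernoulli_fps n" "b n = fps_nth bernoulli_fps n"
    by (simp_all add: b_def bernoulli_fps_nth bernoulli_0)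
  have "1 \<le> n"
    using assms(4) by simp
  have "b n * y ^ n + (\<Sum>i=1..n-1. b i * x ^ i * y ^ (n - i)) + b n * x ^ n
      = b n * (y + x * y ^ n) + (\<Sum>i=1..n-1. b i * (y * x ^ i + x * y ^ (n - i))) + b n * (y * x ^ n + x)
        + x * y * fps_nth bernoulli_fps (n - 1)"
    using bernoulli_convolution_identity[OF assms(1-3), of n] assms(4)
    unfolding b_def[symmetric] sum_atLeastAtMost_split_ends[OF \<open>1 \<le> n\<close>] by (simp add: ends)
  then have "(\<Sum>i=1..n-1. b i * x ^ i * y ^ (n - i))
      = (\<Sum>i=1..n-1. b i * (y * x ^ i + x * y ^ (n - i))) + x * y * fps_nth bernoulli_fps (n - 1)
        + b n * ((x + y) + x * y ^ n + y * x ^ n - y ^ n - x ^ n)"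
    by (simp add: algebra_simps)
  also have "(x + y) + x * y ^ n + y * x ^ n - y ^ n - x ^ n = 1 - x ^ Suc n - y ^ Suc n"
  proof -
    have "(x + y) + x * y ^ n + y * x ^ n - y ^ n - x ^ n
        = (x + y) - x ^ Suc n - y ^ Suc n + (x + y - 1) * (x ^ n + y ^ n)"
      by (simp add: algebra_simps)
    then show ?thesis
      using assms(3) by simp
  qed
  also have "\<dots> = x * y * (\<Sum>k<n. x ^ k + y ^ k)"
    using assms(3) by (rule one_minus_power_Suc_sum)
  finally have "x * y * (\<Sum>i=1..n-1. b i * (x ^ (i - 1) * y ^ (n - i - 1)))
      = x * y * (\<Sum>i=1..n-1. b i * (x ^ (i - 1) + y ^ (n - i - 1)))
          + x * y * fps_nth bernoulli_fps (n - 1) + b n * (x * y * (\<Sum>k<n. x ^ k + y ^ k))"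
    unfolding mult_sum_interior_powers .
  then have "x * y * (\<Sum>i=1..n-1. b i * (x ^ (i - 1) * y ^ (n - i - 1)))
      = x * y * ((\<Sum>i=1..n-1. b i * (x ^ (i - 1) + y ^ (n - i - 1)))
          + fps_nth bernoulli_fps (n - 1) + fps_nth bernoulli_fps n * (\<Sum>k<n. x ^ k + y ^ k))"
    unfolding ends(2) by (simp add: algebra_simps)
  then show ?thesis
    using assms(1,2) by (simp add: b_def)
qed

lemma bernoulli_convolution_integrated:
  assumes "n \<ge> 2"
  shows "(\<Sum>i=1..n-1. fps_nth bernoulli_fps i * fps_nth bernoulli_fps (n - i)
            * (fact (i - 1) * fact (n - i - 1) / fact (n - 1)))
       = (\<Sum>i=1..n-1. fps_nth bernoulli_fps i * fps_nth bernoulli_fps (n - i) * (1 / real i + 1 / real (n - i)))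
         + fps_nth bernoulli_fps (n - 1)
         + fps_nth bernoulli_fps n * (\<Sum>k<n. 1 / real (Suc k) + 1 / real (Suc k))"
    (is "?I = ?J")
proof -
  let ?F = "\<lambda>t::real. \<Sum>i=1..n-1. fps_nth bernoulli_fps i * fps_nth bernoulli_fps (n - i)
              * (t ^ (i - 1) * (1 - t) ^ (n - i - 1))"
  let ?G = "\<lambda>t::real. (\<Sum>i=1..n-1. fps_nth bernoulli_fps i * fps_nth bernoulli_fps (n - i)
              * (t ^ (i - 1) + (1 - t) ^ (n - i - 1)))
            + fps_nth bernoulli_fps (n - 1) + fps_nth bernoulli_fps n * (\<Sum>k<n. t ^ k + (1 - t) ^ k)"
  have F: "(?F has_integral ?I) {0<..<1}"
    by (intro has_integral_sum has_integral_mult_right has_integral_beta_nat) auto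
  have G: "(?G has_integral ?J) {0<..<1}"
    by (intro has_integral_add has_integral_sum has_integral_mult_right has_integral_const_unit_interval
        has_integral_power_unit_interval has_integral_power_one_minus_unit_interval) auto
  have "?F t = ?G t" if "t \<in> {0<..<1}" for t
    using that assms by (intro bernoulli_convolution_divided) auto
  then have "(?F has_integral ?I) {0<..<1} \<longleftrightarrow> (?G has_integral ?I) {0<..<1}"
    by (rule has_integral_cong)
  with F G show ?thesis
    using has_integral_unique by blast
qed

lemma bernoulli_fps_nth_mult_fact_pred:
  assumes "0 < k"
  shows "fps_nth bernoulli_fps k * fact (k - 1) = bernoulli k / real k"
  using fact_reduce[OF assms, where 'a=real] assms by (simp add: bernoulli_fps_nth)

lemma bernoulli_fps_nth_pair_binomial:
  assumes "0 < i" "i < n"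
  shows "fact (n - 1) * (fps_nth bernoulli_fps i * fps_nth bernoulli_fps (n - i)
           * (1 / real i + 1 / real (n - i)))
       = bernoulli i * bernoulli (n - i) / (real i * real (n - i)) * real (n choose i)"
proof -
  have "1 / real i + 1 / real (n - i) = real n / (real i * real (n - i))"
    using assms by (simp add: field_simps)
  then have "fact (n - 1) * (fps_nth bernoulli_fps i * fps_nth bernoulli_fps (n - i)
               * (1 / real i + 1 / real (n - i)))
      = fact (n - 1) * real n * (fps_nth bernoulli_fps i * fps_nth bernoulli_fps (n - i))
          / (real i * real (n - i))"
    by simp
  also have "fact (n - 1) * real n = (fact n :: real)"
    using fact_reduce[of n, where 'a=real] assms by simp
  also have "fact n * (fps_nth bernoulli_fps i * fps_nth bernoulli_fps (n - i))
      = real (n choose i) * (bernoulli i * bernoulli (n - i))"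
    using assms by (simp add: bernoulli_fps_nth binomial_fact)
  finally show ?thesis
    by simp
qed

lemma bernoulli_convolution_harmonic:
  assumes "n \<ge> 2"
  shows "(\<Sum>i=1..n-1. bernoulli i * bernoulli (n - i) / (real i * real (n - i)))
       = (\<Sum>i=1..n-1. bernoulli i * bernoulli (n - i) / (real i * real (n - i)) * real (n choose i))
         + bernoulli (n - 1) + 2 * bernoulli n / real n * harm n"
proof -
  have beta_integral: "fact (n - 1) * (fps_nth bernoulli_fps i * fps_nth bernoulli_fps (n - i)
                 * (fact (i - 1) * fact (n - i - 1) / fact (n - 1)))
            = bernoulli i * bernoulli (n - i) / (real i * real (n - i))"
    if "i \<in> {1..n-1}" for i
  proof -
    have "0 < i" "0 < n - i"
      using that by auto
    have "fact (n - 1) * (fps_nth bernoulli_fps i * fps_nth bernoulli_fps (n - i)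
            * (fact (i - 1) * fact (n - i - 1) / fact (n - 1)))
        = (fps_nth bernoulli_fps i * fact (i - 1)) * (fps_nth bernoulli_fps (n - i) * fact (n - i - 1))"
      by (simp add: mult_ac)
    also have "\<dots> = bernoulli i / real i * (bernoulli (n - i) / real (n - i))"
      by (simp only: bernoulli_fps_nth_mult_fact_pred[OF \<open>0 < i\<close>]
          bernoulli_fps_nth_mult_fact_pred[OF \<open>0 < n - i\<close>])
    finally show ?thesis
      by simp
  qed
  have binomial_part: "fact (n - 1) * (\<Sum>i=1..n-1. fps_nth bernoulli_fps i * fps_nth bernoulli_fps (n - i)
              * (1 / real i + 1 / real (n - i)))
      = (\<Sum>i=1..n-1. bernoulli i * bernoulli (n - i) / (real i * real (n - i)) * real (n choose i))"
    unfolding sum_distrib_left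
    by (intro sum.cong refl bernoulli_fps_nth_pair_binomial) auto
  have boundary: "fact (n - 1) * fps_nth bernoulli_fps (n - 1) = bernoulli (n - 1)"
    by (simp add: bernoulli_fps_nth)
  have "(\<Sum>k<n. 1 / real (Suc k) + 1 / real (Suc k)) = 2 * harm n"
    by (simp add: harm_altdef sum_distrib_left inverse_eq_divide)
  moreover have "fact (n - 1) * fps_nth bernoulli_fps n = bernoulli n / real n"
    using bernoulli_fps_nth_mult_fact_pred[of n] assms by (simp add: mult.commute)
  ultimately have harmonic:
    "fact (n - 1) * (fps_nth bernoulli_fps n * (\<Sum>k<n. 1 / real (Suc k) + 1 / real (Suc k)))
      = 2 * bernoulli n / real n * harm n"
    by (simp add: mult.assoc[symmetric])
  have "(\<Sum>i=1..n-1. bernoulli i * bernoulli (n - i) / (real i * real (n - i)))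
      = fact (n - 1) * (\<Sum>i=1..n-1. fps_nth bernoulli_fps i * fps_nth bernoulli_fps (n - i)
            * (fact (i - 1) * fact (n - i - 1) / fact (n - 1)))"
    unfolding sum_distrib_left by (intro sum.cong refl) (simp only: beta_integral)
  also have "\<dots> = fact (n - 1) * (\<Sum>i=1..n-1. fps_nth bernoulli_fps i * fps_nth bernoulli_fps (n - i)
              * (1 / real i + 1 / real (n - i)))
         + fact (n - 1) * fps_nth bernoulli_fps (n - 1)
         + fact (n - 1) * (fps_nth bernoulli_fps n * (\<Sum>k<n. 1 / real (Suc k) + 1 / real (Suc k)))"
    unfolding bernoulli_convolution_integrated[OF assms] by (simp only: distrib_left[of "fact (n - 1)"])
  also have "\<dots> = (\<Sum>i=1..n-1. bernoulli i * bernoulli (n - i) / (real i * real (n - i)) * real (n choose i))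
         + bernoulli (n - 1) + 2 * bernoulli n / real n * harm n"
    by (simp only: binomial_part harmonic boundary)
  finally show ?thesis .
qed

theorem theorem1p2:
  fixes n :: nat
  assumes "n \<ge> 2"
  shows "(\<Sum>k=1..n-1. bernoulli (2*k) * bernoulli (2*n-2*k) / (real (2*k) * real (2*n-2*k)))
       = (\<Sum>k=1..n-1. bernoulli (2*k) * bernoulli (2*n-2*k) / (real (2*k) * real (2*n-2*k))
              * real ((2*n) choose (2*k)))
         + bernoulli (2*n) / real n * harm (2*n)"
proof -
  have vanish: "bernoulli i * bernoulli (2*n - i) = 0" if "i \<in> {1..2*n-1}" "odd i" for i
  proof (cases "i = 1")
    case True
    then show ?thesis
      using assms by (simp add: bernoulli_odd_eq_0)
  next
    case False
    then show ?thesis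
      using that by (simp add: bernoulli_odd_eq_0)
  qed
  have "(\<Sum>i=1..2*n-1. bernoulli i * bernoulli (2*n - i) / (real i * real (2*n - i)))
      = (\<Sum>k=1..n-1. bernoulli (2*k) * bernoulli (2*n-2*k) / (real (2*k) * real (2*n-2*k)))"
    by (rule sum_odd_vanishing_eq_sum_even) (simp add: vanish)
  moreover have "(\<Sum>i=1..2*n-1. bernoulli i * bernoulli (2*n - i) / (real i * real (2*n - i))
                    * real ((2*n) choose i))
      = (\<Sum>k=1..n-1. bernoulli (2*k) * bernoulli (2*n-2*k) / (real (2*k) * real (2*n-2*k))
                    * real ((2*n) choose (2*k)))"
    by (rule sum_odd_vanishing_eq_sum_even) (simp add: vanish)
  moreover have "bernoulli (2*n - 1) = 0"
    using assms by (intro bernoulli_odd_eq_0) auto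
  ultimately show ?thesis
    using bernoulli_convolution_harmonic[of "2*n"] assms by simp
qed

end
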